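(* Let $h:H\to K$ be an isomorphism between subgroups $K\subset H$ of a group $G$, and suppose there is $z\in H$ commuting with every element of $K$ such that $z^2\notin K$. Let $\mathcal F\subset\mathcal P_G$ be an $h$-invariant left-invariant ideal. If $A\subset H$ and $A\in\tau^\alpha(\mathcal F)$ for some ordinal $\alpha$, then $h(A)\cup z\,h(A)\in\tau^{\alpha+1}(\mathcal F)$.
   Context: $\mathcal F$ is $h$-invariant if for every $A\subset H$: $A\in\mathcal F$ iff $h(A)\in\mathcal F$. An ideal is closed under subsets and finite unions; left-invariant: $xF\in\mathcal F$ for $F\in\mathcal F$, $x\in G$. $\tau(\mathcal F)=\{A\subset G: xA\cap yA\in\mathcal F$ for all distinct $x,y\in G\}$, $\tau^0(\mathcal F)=\mathcal F$, $\tau^{<\alpha}(\mathcal F)=\bigcup_{\beta<\alpha}\tau^\beta(\mathcal F)$, $\tau^\alpha(\mathcal F)=\tau(\tau^{<\alpha}(\mathcal F))$ for $\alpha>0$. *)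

theory Defs
  imports "HOL-Algebra.Coset"
begin

definition tau :: "('a, 'b) monoid_scheme \<Rightarrow> 'a set set \<Rightarrow> 'a set set" where
  "tau G F = {A. A \<subseteq> carrier G \<and>
     (\<forall>x\<in>carrier G. \<forall>y\<in>carrier G. x \<noteq> y \<longrightarrow> (x <#\<^bsub>G\<^esub> A) \<inter> (y <#\<^bsub>G\<^esub> A) \<in> F)}"

text \<open>Ordinals are represented by elements of a
  well-order r (a non-strict well-order relation): the element a of Field r stands for
  the order type alpha of its strict initial segment.\<close>
definition tau_iter :: "('a, 'b) monoid_scheme \<Rightarrow> 'a set set \<Rightarrow> 'o rel \<Rightarrow> 'o \<Rightarrow> 'a set set" where
  "tau_iter G F r = wfrec (r - Id)
     (\<lambda>rec a. if (\<exists>b. (b, a) \<in> r - Id)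
              then tau G (\<Union> {rec b | b. (b, a) \<in> r - Id})
              else F)"

definition left_invariant_ideal :: "('a, 'b) monoid_scheme \<Rightarrow> 'a set set \<Rightarrow> bool" where
  "left_invariant_ideal G F \<longleftrightarrow>
     F \<subseteq> Pow (carrier G) \<and>
     (\<forall>A\<in>F. \<forall>B. B \<subseteq> A \<longrightarrow> B \<in> F) \<and>
     (\<forall>A\<in>F. \<forall>B\<in>F. A \<union> B \<in> F) \<and>
     (\<forall>A\<in>F. \<forall>x\<in>carrier G. x <#\<^bsub>G\<^esub> A \<in> F)"

definition h_invariant :: "('a \<Rightarrow> 'a) \<Rightarrow> 'a set \<Rightarrow> 'a set set \<Rightarrow> bool" where
  "h_invariant h H F \<longleftrightarrow> (\<forall>A. A \<subseteq> H \<longrightarrow> (A \<in> F \<longleftrightarrow> h ` A \<in> F))"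

end

theory Submission
  imports Defs
begin

(* The proof rests on one reformulation: for a family S that is closed under subsets
   and left translations, A \<in> tau(S) iff A \<inter> gA \<in> S for every g \<noteq> 1, because
   xA \<inter> yA = x (A \<inter> x\<inverse>yA).  Every level tau^alpha(F) is such a family, so all
   arguments reduce to self-intersections A \<inter> gA.
   (1) The isomorphism h preserves every level: h(A) \<inter> g h(A) is h(A \<inter> kA) when
       g = h(k) \<in> K, and empty when g \<notin> K.
   (2) For C \<subseteq> K the doubled set C \<union> zC satisfies: if g \<in> K, its self-intersection
       lies in the doubling of C \<inter> gC; if g \<notin> K, it lies in C or in zC (the two
       remaining possibilities would force z\<^sup>2 \<in> K).  By well-founded induction on the
       level this gives C \<union> zC \<in> tau^beta(F) whenever C \<in> tau^alpha(F) and alpha < beta.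
   The theorem applies (1) and then (2) to C = h(A) \<subseteq> K.  Ordinals are elements of the
   well-order r; the proof works for any beta above alpha, not only the successor. *)

definition translation_ideal :: "('a, 'b) monoid_scheme \<Rightarrow> 'a set set \<Rightarrow> bool" where
  "translation_ideal G S \<longleftrightarrow>
     (\<forall>X\<in>S. \<forall>Y. Y \<subseteq> X \<longrightarrow> Y \<in> S) \<and> (\<forall>X\<in>S. \<forall>x\<in>carrier G. x <#\<^bsub>G\<^esub> X \<in> S)"

lemma translation_idealD:
  assumes "translation_ideal G S" "X \<in> S"
  shows "Y \<subseteq> X \<Longrightarrow> Y \<in> S" and "x \<in> carrier G \<Longrightarrow> x <#\<^bsub>G\<^esub> X \<in> S"
  using assms by (auto simp: translation_ideal_def)

lemma translation_ideal_Union: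
  "(\<And>S. S \<in> \<S> \<Longrightarrow> translation_ideal G S) \<Longrightarrow> translation_ideal G (\<Union>\<S>)"
  unfolding translation_ideal_def by blast

lemma left_invariant_ideal_translation_ideal:
  "left_invariant_ideal G F \<Longrightarrow> translation_ideal G F"
  unfolding left_invariant_ideal_def translation_ideal_def by blast

context group begin

lemma lcos_inter:
  assumes "A \<subseteq> carrier G" "x \<in> carrier G" "y \<in> carrier G"
  shows "(x <# A) \<inter> (y <# A) = x <# (A \<inter> ((inv x \<otimes> y) <# A))"
proof -
  have "y <# A = x <# ((inv x \<otimes> y) <# A)"
    using assms by (simp add: lcos_m_assoc flip: m_assoc)
  moreover have "x <# (A \<inter> B) = (x <# A) \<inter> (x <# B)" if "B \<subseteq> carrier G" for B
    using that assms(1,2) by (auto simp: l_coset_def) (metis IntI Units_eq Units_l_cancel subsetD)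
  ultimately show ?thesis
    using assms by (simp add: l_coset_subset_G)
qed

lemma tau_iff_self_inter:
  assumes "translation_ideal G S"
  shows "A \<in> tau G S \<longleftrightarrow>
    A \<subseteq> carrier G \<and> (\<forall>g\<in>carrier G. g \<noteq> \<one> \<longrightarrow> A \<inter> (g <# A) \<in> S)"
proof
  assume A: "A \<in> tau G S"
  then have "A \<subseteq> carrier G" by (simp add: tau_def)
  moreover have "A \<inter> (g <# A) \<in> S" if "g \<in> carrier G" "g \<noteq> \<one>" for g
    using A that \<open>A \<subseteq> carrier G\<close> by (force simp: tau_def lcos_mult_one)
  ultimately show "A \<subseteq> carrier G \<and> (\<forall>g\<in>carrier G. g \<noteq> \<one> \<longrightarrow> A \<inter> (g <# A) \<in> S)"
    by blast
next
  assume A: "A \<subseteq> carrier G \<and> (\<forall>g\<in>carrier G. g \<noteq> \<one> \<longrightarrow> A \<inter> (g <# A) \<in> S)"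
  have "(x <# A) \<inter> (y <# A) \<in> S" if "x \<in> carrier G" "y \<in> carrier G" "x \<noteq> y" for x y
  proof -
    have "inv x \<otimes> y \<noteq> \<one>"
      using that by (metis inv_solve_left' one_closed r_one)
    then have "A \<inter> ((inv x \<otimes> y) <# A) \<in> S"
      using A that by simp
    then show ?thesis
      using A that assms by (simp add: lcos_inter translation_idealD)
  qed
  then show "A \<in> tau G S"
    using A by (simp add: tau_def)
qed

(* tau preserves closure under subsets and translations; for translations use
   xX \<inter> g(xX) = x (X \<inter> (x\<inverse>gx) X). *)
lemma tau_translation_ideal:
  assumes S: "translation_ideal G S"
  shows "translation_ideal G (tau G S)"
  unfolding translation_ideal_def
proof (intro conjI ballI allI impI)
  fix X Y assume "X \<in> tau G S" "Y \<subseteq> X"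
  then show "Y \<in> tau G S"
    using S by (auto simp: tau_iff_self_inter l_coset_def intro: translation_idealD(1))
next
  fix X x assume X: "X \<in> tau G S" and x: "x \<in> carrier G"
  have Xc: "X \<subseteq> carrier G" using X by (simp add: tau_def)
  have "(x <# X) \<inter> (g <# (x <# X)) \<in> S" if "g \<in> carrier G" "g \<noteq> \<one>" for g
  proof -
    have "inv x \<otimes> g \<otimes> x \<noteq> \<one>"
      using that x by (metis inv_closed m_closed r_cancel_one l_cancel_one r_inv m_assoc)
    then have "X \<inter> ((inv x \<otimes> g \<otimes> x) <# X) \<in> S"
      using X that x S by (simp add: tau_iff_self_inter)
    moreover have "(x <# X) \<inter> (g <# (x <# X)) = x <# (X \<inter> ((inv x \<otimes> g \<otimes> x) <# X))"
      using lcos_inter[OF Xc x, of "g \<otimes> x"] that x Xc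
      by (simp add: lcos_m_assoc m_assoc)
    ultimately show ?thesis
      using S x by (simp add: translation_idealD(2))
  qed
  then show "x <# X \<in> tau G S"
    using Xc x S by (simp add: tau_iff_self_inter l_coset_subset_G)
qed

end

definition tau_below :: "('a, 'b) monoid_scheme \<Rightarrow> 'a set set \<Rightarrow> 'o rel \<Rightarrow> 'o \<Rightarrow> 'a set set" where
  "tau_below G F r a = \<Union> {tau_iter G F r b | b. (b, a) \<in> r - Id}"

lemma Well_order_wf: "Well_order r \<Longrightarrow> wf (r - Id)"
  by (simp add: well_order_on_def)

lemma setcompr_cong: "(\<And>b. P b \<Longrightarrow> f b = g b) \<Longrightarrow> {f b | b. P b} = {g b | b. P b}"
  by auto metis+

lemma tau_iter_unfold:
  assumes "Well_order r"
  shows "tau_iter G F r a =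
    (if \<exists>b. (b, a) \<in> r - Id then tau G (tau_below G F r a) else F)"
  unfolding tau_iter_def tau_below_def
  by (subst wfrec[OF Well_order_wf[OF assms]]) (intro if_cong refl arg_cong[where f = "tau G"]
      arg_cong[where f = Union] setcompr_cong, simp add: cut_apply)

lemma tau_iter_base:
  "Well_order r \<Longrightarrow> \<nexists>b. (b, a) \<in> r - Id \<Longrightarrow> tau_iter G F r a = F"
  by (subst tau_iter_unfold) auto

lemma tau_iter_step:
  "Well_order r \<Longrightarrow> \<exists>b. (b, a) \<in> r - Id \<Longrightarrow> tau_iter G F r a = tau G (tau_below G F r a)"
  by (simp add: tau_iter_unfold)

lemma tau_iter_subset_below:
  "(b, a) \<in> r - Id \<Longrightarrow> tau_iter G F r b \<subseteq> tau_below G F r a"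
  by (auto simp: tau_below_def)

lemma tau_below_memD:
  "X \<in> tau_below G F r a \<Longrightarrow> \<exists>b. (b, a) \<in> r - Id \<and> X \<in> tau_iter G F r b"
  by (auto simp: tau_below_def)

lemma tau_iter_translation_ideal:
  assumes "group G" "Well_order r" "left_invariant_ideal G F"
  shows "translation_ideal G (tau_iter G F r a)"
  using Well_order_wf[OF assms(2)]
proof (induction a rule: wf_induct_rule)
  case (less a)
  show ?case
  proof (cases "\<exists>b. (b, a) \<in> r - Id")
    case True
    have "translation_ideal G (tau_below G F r a)"
      unfolding tau_below_def using less by (auto intro: translation_ideal_Union)
    then show ?thesis
      using True assms by (auto simp: tau_iter_step group.tau_translation_ideal)
  qed (use assms in \<open>simp add: tau_iter_base left_invariant_ideal_translation_ideal\<close>)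
qed

lemma tau_below_translation_ideal:
  assumes "group G" "Well_order r" "left_invariant_ideal G F"
  shows "translation_ideal G (tau_below G F r a)"
  unfolding tau_below_def
  using tau_iter_translation_ideal[OF assms] by (auto intro: translation_ideal_Union)

context group begin

lemma subgroup_factor_mem:
  assumes "subgroup K G" "k1 \<in> K" "k2 \<in> K" "g \<in> carrier G" "k1 = g \<otimes> k2"
  shows "g \<in> K"
proof -
  have "g = k1 \<otimes> inv k2"
    using assms by (simp add: inv_solve_right subgroup.mem_carrier)
  then show ?thesis
    using assms(1-3) by (metis subgroup.m_closed subgroup.m_inv_closed)
qed

lemma subgroup_self_inter_empty:
  assumes "subgroup K G" "X \<subseteq> K" "g \<in> carrier G" "g \<notin> K"
  shows "X \<inter> (g <# X) = {}"
  using assms subgroup_factor_mem[OF assms(1) _ _ assms(3)] by (auto simp: l_coset_def)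

lemma iso_image_self_inter:
  assumes "subgroup H G" "h \<in> iso (G\<lparr>carrier := H\<rparr>) (G\<lparr>carrier := K\<rparr>)"
    and "A \<subseteq> H" "k \<in> H"
  shows "h ` (A \<inter> (k <# A)) = h ` A \<inter> (h k <# h ` A)"
proof -
  have mult: "h (x \<otimes> y) = h x \<otimes> h y" if "x \<in> H" "y \<in> H" for x y
    using assms(2) that by (auto simp: iso_def hom_def)
  have inj: "inj_on h H"
    using assms(2) by (auto simp: iso_def bij_betw_def)
  have kA: "k \<otimes> a \<in> H" if "a \<in> A" for a
    using assms(1,3,4) that by (auto intro: subgroup.m_closed)
  show ?thesis
  proof
    show "h ` (A \<inter> (k <# A)) \<subseteq> h ` A \<inter> (h k <# h ` A)"
      using assms(3,4) mult by (auto simp: l_coset_def)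
  next
    show "h ` A \<inter> (h k <# h ` A) \<subseteq> h ` (A \<inter> (k <# A))"
    proof
      fix w assume "w \<in> h ` A \<inter> (h k <# h ` A)"
      then obtain a1 a2 where a: "a1 \<in> A" "a2 \<in> A" "w = h a1" "h a1 = h k \<otimes> h a2"
        by (auto simp: l_coset_def)
      then have "h a1 = h (k \<otimes> a2)"
        using assms(3,4) mult by auto
      then have "a1 = k \<otimes> a2"
        using a assms(3) kA inj_onD[OF inj] by blast
      then have "a1 \<in> A \<inter> (k <# A)"
        using a by (auto simp: l_coset_def)
      then show "w \<in> h ` (A \<inter> (k <# A))"
        using a(3) by blast
    qed
  qed
qed

lemma iso_one:
  assumes "subgroup H G" "subgroup K G" "h \<in> iso (G\<lparr>carrier := H\<rparr>) (G\<lparr>carrier := K\<rparr>)"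
  shows "h \<one> = \<one>"
  using hom_one[of h "G\<lparr>carrier := H\<rparr>" "G\<lparr>carrier := K\<rparr>"] assms
  by (simp add: iso_def subgroup_imp_group)

lemma iso_image_self_inter_cases:
  assumes H: "subgroup H G" and K: "subgroup K G"
    and iso: "h \<in> iso (G\<lparr>carrier := H\<rparr>) (G\<lparr>carrier := K\<rparr>)"
    and A: "A \<subseteq> H" and g: "g \<in> carrier G" "g \<noteq> \<one>"
  shows "(\<exists>k\<in>H. k \<noteq> \<one> \<and> h ` A \<inter> (g <# h ` A) = h ` (A \<inter> (k <# A)))
    \<or> h ` A \<inter> (g <# h ` A) = {}"
proof (cases "g \<in> K")
  case True
  have "h ` H = K"
    using iso by (simp add: iso_def bij_betw_def)
  then obtain k where k: "k \<in> H" "h k = g"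
    using True by blast
  then have "k \<noteq> \<one>"
    using g iso_one[OF H K iso] by auto
  then show ?thesis
    using k iso_image_self_inter[OF H iso A k(1)] by metis
next
  case False
  have "h ` A \<subseteq> K"
    using A iso by (auto simp: iso_def bij_betw_def)
  then show ?thesis
    using subgroup_self_inter_empty[OF K _ g(1) False] by blast
qed

(* Every level is invariant under h, for subsets of H.  The nontrivial element u
   guarantees that the empty set appears among the self-intersections. *)
lemma tau_iter_image:
  assumes r: "Well_order r" and F: "left_invariant_ideal G F"
    and H: "subgroup H G" and K: "subgroup K G"
    and iso: "h \<in> iso (G\<lparr>carrier := H\<rparr>) (G\<lparr>carrier := K\<rparr>)"
    and hinv: "h_invariant h H F"
    and u: "u \<in> carrier G" "u \<noteq> \<one>"
  shows "A \<subseteq> H \<Longrightarrow> A \<in> tau_iter G F r c \<Longrightarrow> h ` A \<in> tau_iter G F r c"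
  using Well_order_wf[OF r]
proof (induction c arbitrary: A rule: wf_induct_rule)
  case (less c)
  show ?case
  proof (cases "\<exists>b. (b, c) \<in> r - Id")
    case False
    then show ?thesis
      using less.prems hinv r by (simp add: tau_iter_base h_invariant_def)
  next
    case True
    let ?S = "tau_below G F r c"
    have S: "translation_ideal G ?S"
      using tau_below_translation_ideal[OF group_axioms r F] .
    have A: "A \<in> tau G ?S"
      using less.prems True r by (simp add: tau_iter_step)
    have "h ` A \<inter> (g <# h ` A) \<in> ?S" if g: "g \<in> carrier G" "g \<noteq> \<one>" for g
      using iso_image_self_inter_cases[OF H K iso less.prems(1) g]
    proof (elim disjE bexE conjE)
      fix k assume k: "k \<in> H" "k \<noteq> \<one>"
        and eq: "h ` A \<inter> (g <# h ` A) = h ` (A \<inter> (k <# A))"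
      have "A \<inter> (k <# A) \<in> ?S"
        using A S k H by (simp add: tau_iff_self_inter subgroup.mem_carrier)
      then obtain d where d: "(d, c) \<in> r - Id" "A \<inter> (k <# A) \<in> tau_iter G F r d"
        by (auto dest: tau_below_memD)
      then have "h ` (A \<inter> (k <# A)) \<in> tau_iter G F r d"
        using less.IH less.prems(1) by blast
      then show ?thesis
        using tau_iter_subset_below[OF d(1)] eq by auto
    next
      assume "h ` A \<inter> (g <# h ` A) = {}"
      moreover have "A \<inter> (u <# A) \<in> ?S"
        using A S u by (simp add: tau_iff_self_inter)
      ultimately show ?thesis
        using S by (auto intro: translation_idealD(1))
    qed
    moreover have "h ` A \<subseteq> carrier G"
      using less.prems(1) iso K by (auto simp: iso_def bij_betw_def dest: subgroup.subset)
    ultimately have "h ` A \<in> tau G ?S"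
      using S by (simp add: tau_iff_self_inter)
    then show ?thesis
      using True r by (simp add: tau_iter_step)
  qed
qed

end

locale doubling = group +
  fixes K :: "'a set" and z :: 'a
  assumes K: "subgroup K G" and z: "z \<in> carrier G"
    and z_comm: "\<And>k. k \<in> K \<Longrightarrow> z \<otimes> k = k \<otimes> z"
    and z_sq: "z \<otimes> z \<notin> K"
begin

definition double :: "'a set \<Rightarrow> 'a set" where
  "double X = X \<union> (z <# X)"

lemma K_carrier: "k \<in> K \<Longrightarrow> k \<in> carrier G"
  using K by (rule subgroup.mem_carrier)

lemma z_notin_K: "z \<notin> K"
  using z_sq K by (metis subgroup.m_closed)

(* The following lemmas solve the four equations w = g v with w, v in C \<union> zC, C \<subseteq> K.
   Both sides shifted by z: the shift cancels, since z commutes with K. *)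
lemma shift_z_z:
  assumes "c1 \<in> K" "c2 \<in> K" "g \<in> carrier G" "z \<otimes> c1 = g \<otimes> (z \<otimes> c2)"
  shows "c1 = g \<otimes> c2"
proof -
  have "c1 \<otimes> z = z \<otimes> c1" "z \<otimes> c2 = c2 \<otimes> z"
    using assms(1,2) z_comm by auto
  then have "c1 \<otimes> z = (g \<otimes> c2) \<otimes> z"
    using assms z by (simp add: m_assoc K_carrier)
  then show ?thesis
    using assms z by (simp add: K_carrier)
qed

lemma shift_c_z:
  assumes "c1 \<in> K" "c2 \<in> K" "g \<in> carrier G" "c1 = g \<otimes> (z \<otimes> c2)"
  shows "g \<otimes> z \<in> K"
  using subgroup_factor_mem[OF K, OF assms(1,2)] assms z by (simp add: K_carrier m_assoc)

lemma shift_z_c: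
  assumes "c1 \<in> K" "c2 \<in> K" "g \<in> carrier G" "z \<otimes> c1 = g \<otimes> c2"
  shows "inv z \<otimes> g \<in> K"
proof -
  have "c1 = inv z \<otimes> (z \<otimes> c1)"
    using assms(1) z by (simp add: K_carrier flip: m_assoc)
  also have "\<dots> = (inv z \<otimes> g) \<otimes> c2"
    using assms z by (simp add: K_carrier m_assoc)
  finally show ?thesis
    using subgroup_factor_mem[OF K, OF assms(1,2)] assms(3) z by simp
qed

(* The two one-sided cases exclude each other, since together they give z\<^sup>2 \<in> K. *)
lemma not_both_shifts:
  assumes "g \<in> carrier G" "g \<otimes> z \<in> K" "inv z \<otimes> g \<in> K"
  shows False
proof -
  have g: "g = z \<otimes> (inv z \<otimes> g)"
    using assms(1) z by (simp flip: m_assoc)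
  have "g \<otimes> z = z \<otimes> ((inv z \<otimes> g) \<otimes> z)"
    using assms(1) z by (subst g) (simp add: m_assoc)
  also have "\<dots> = (z \<otimes> z) \<otimes> (inv z \<otimes> g)"
    using assms z z_comm[OF assms(3)] by (simp add: m_assoc)
  finally have "z \<otimes> z \<in> K"
    using subgroup_factor_mem[OF K, OF assms(2,3)] z by simp
  then show False
    using z_sq by contradiction
qed

lemma shifts_notin_K:
  assumes g: "g \<in> K"
  shows "g \<otimes> z \<notin> K" and "inv z \<otimes> g \<notin> K"
proof -
  have gc: "g \<in> carrier G" using g by (rule K_carrier)
  have "z = inv g \<otimes> (g \<otimes> z)"
    using gc z by (simp flip: m_assoc)
  then show "g \<otimes> z \<notin> K"
    using g z_notin_K K by (metis subgroup.m_closed subgroup.m_inv_closed)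
  have "inv z = (inv z \<otimes> g) \<otimes> inv g"
    using gc z by (simp add: m_assoc)
  then show "inv z \<otimes> g \<notin> K"
    using g z z_notin_K K by (metis inv_inv subgroup.m_closed subgroup.m_inv_closed)
qed

lemma double_self_inter_cases:
  assumes C: "C \<subseteq> K" and g: "g \<in> carrier G"
    and w: "w \<in> double C" "w \<in> g <# double C"
  obtains (plain) c2 where "c2 \<in> C" "w \<in> C" "w = g \<otimes> c2"
    | (shifted) c1 c2 where "c1 \<in> C" "c2 \<in> C" "w = z \<otimes> c1" "c1 = g \<otimes> c2"
    | (right) "w \<in> C" "g \<otimes> z \<in> K"
    | (left) "w \<in> z <# C" "inv z \<otimes> g \<in> K"
proof -
  obtain v where v: "v \<in> C \<union> (z <# C)" "w = g \<otimes> v"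
    using w(2) by (auto simp: l_coset_def double_def)
  have CK: "c \<in> K" if "c \<in> C" for c
    using that C by blast
  from w(1) v(1) [unfolded double_def] consider
      "w \<in> C" "v \<in> C"
    | c1 c2 where "c1 \<in> C" "c2 \<in> C" "w = z \<otimes> c1" "v = z \<otimes> c2"
    | c2 where "w \<in> C" "c2 \<in> C" "v = z \<otimes> c2"
    | c1 where "c1 \<in> C" "v \<in> C" "w = z \<otimes> c1"
    by (auto simp: l_coset_def double_def)
  then show thesis
  proof cases
    case 1
    then show thesis using plain v(2) by blast
  next
    case (2 c1 c2)
    then show thesis
      using shifted shift_z_z[OF CK CK g] v(2) by metis
  next
    case (3 c2)
    then show thesis
      using right shift_c_z[OF CK CK g] v(2) by metis
  next
    case (4 c1)
    then have "w \<in> z <# C"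
      by (auto simp: l_coset_def)
    then show thesis
      using 4 left shift_z_c[OF CK CK g] v(2) by metis
  qed
qed

lemma double_self_inter_in_K:
  assumes C: "C \<subseteq> K" and g: "g \<in> K"
  shows "double C \<inter> (g <# double C) \<subseteq> double (C \<inter> (g <# C))"
proof
  fix w assume "w \<in> double C \<inter> (g <# double C)"
  then show "w \<in> double (C \<inter> (g <# C))"
    by (elim IntE double_self_inter_cases[OF C K_carrier[OF g]])
      (use shifts_notin_K[OF g] in \<open>auto simp: double_def l_coset_def\<close>)
qed

lemma double_self_inter_notin_K:
  assumes C: "C \<subseteq> K" and g: "g \<in> carrier G" "g \<notin> K"
  shows "double C \<inter> (g <# double C) \<subseteq> C \<or> double C \<inter> (g <# double C) \<subseteq> z <# C"
proof -
  have cases: "(w \<in> C \<and> g \<otimes> z \<in> K) \<or> (w \<in> z <# C \<and> inv z \<otimes> g \<in> K)"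
    if "w \<in> double C \<inter> (g <# double C)" for w
  proof -
    have no_plain: False if "c1 \<in> C" "c2 \<in> C" "c1 = g \<otimes> c2" for c1 c2
      using subgroup_factor_mem[OF K, of c1 c2 g] that C g by blast
    from that show ?thesis
      by (elim IntE double_self_inter_cases[OF C g(1)]) (auto dest: no_plain)
  qed
  show ?thesis
  proof (cases "inv z \<otimes> g \<in> K")
    case True
    then show ?thesis using cases not_both_shifts[OF g(1)] by blast
  next
    case False
    then show ?thesis using cases by blast
  qed
qed

lemma double_mono: "X \<subseteq> Y \<Longrightarrow> double X \<subseteq> double Y"
  by (auto simp: double_def l_coset_def)

lemma double_carrier: "X \<subseteq> carrier G \<Longrightarrow> double X \<subseteq> carrier G"
  using z by (auto simp: double_def l_coset_def)

(* Here the union axiom of the ideal F is used. *)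
lemma left_invariant_ideal_double:
  "left_invariant_ideal G F \<Longrightarrow> C \<in> F \<Longrightarrow> double C \<in> F"
  using z by (simp add: left_invariant_ideal_def double_def)

lemma tau_iter_double_step:
  assumes r: "Well_order r" and F: "left_invariant_ideal G F"
    and C: "C \<subseteq> K" "C \<in> tau_iter G F r a" and ab: "(a, b) \<in> r - Id"
    and inter_K: "\<And>g. g \<in> K \<Longrightarrow> g \<noteq> \<one> \<Longrightarrow> double (C \<inter> (g <# C)) \<in> tau_iter G F r a"
  shows "double C \<in> tau_iter G F r b"
proof -
  note ideal = tau_iter_translation_ideal[OF group_axioms r F]
  have "double C \<inter> (g <# double C) \<in> tau_iter G F r a"
    if g: "g \<in> carrier G" "g \<noteq> \<one>" for g
  proof (cases "g \<in> K")
    case True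
    then show ?thesis
      using double_self_inter_in_K[OF C(1) True] inter_K[OF True g(2)] ideal
      by (auto intro: translation_idealD(1))
  next
    case False
    have "z <# C \<in> tau_iter G F r a"
      using ideal C(2) z by (rule translation_idealD(2))
    then show ?thesis
      using double_self_inter_notin_K[OF C(1) g(1) False] C(2) ideal
      by (auto intro: translation_idealD(1))
  qed
  moreover have "double C \<subseteq> carrier G"
    using C(1) K_carrier double_carrier by blast
  ultimately have "double C \<in> tau G (tau_below G F r b)"
    using tau_iter_subset_below[OF ab, of G F] tau_below_translation_ideal[OF group_axioms r F]
    by (auto simp: tau_iff_self_inter)
  moreover have "\<exists>c. (c, b) \<in> r - Id"
    using ab by blast
  ultimately show ?thesis
    by (simp add: tau_iter_step[OF r])
qed

(* By induction on the
   level a: the self-intersection C \<inter> gC (g \<in> K) lies in F if a is least, and at a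
   lower level otherwise, where the induction hypothesis applies. *)
lemma tau_iter_double:
  assumes r: "Well_order r" and F: "left_invariant_ideal G F"
  shows "C \<subseteq> K \<Longrightarrow> C \<in> tau_iter G F r a \<Longrightarrow> (a, b) \<in> r - Id \<Longrightarrow>
    double C \<in> tau_iter G F r b"
  using Well_order_wf[OF r]
proof (induction a arbitrary: C b rule: wf_induct_rule)
  case (less a)
  have "double (C \<inter> (g <# C)) \<in> tau_iter G F r a" if g: "g \<in> K" "g \<noteq> \<one>" for g
  proof (cases "\<exists>c. (c, a) \<in> r - Id")
    case True
    have "C \<inter> (g <# C) \<in> tau_below G F r a"
      using less.prems(1,2) True r g K_carrier tau_below_translation_ideal[OF group_axioms r F]
      by (auto simp: tau_iter_step tau_iff_self_inter)
    then obtain d where "(d, a) \<in> r - Id" "C \<inter> (g <# C) \<in> tau_iter G F r d"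
      by (auto dest: tau_below_memD)
    then show ?thesis
      using less.IH less.prems(1) by blast
  next
    case False
    have "double C \<in> F"
      using less.prems(2) r F False by (simp add: tau_iter_base left_invariant_ideal_double)
    then show ?thesis
      using double_mono[of "C \<inter> (g <# C)" C] r F False
      by (auto simp: tau_iter_base left_invariant_ideal_def)
  qed
  then show ?case
    using tau_iter_double_step[OF r F less.prems] by blast
qed

end

theorem lemma6p3:
  fixes G :: "('a, 'b) monoid_scheme" and H K :: "'a set" and h :: "'a \<Rightarrow> 'a"
    and z :: 'a and F :: "'a set set" and A :: "'a set"
    and r :: "'o rel" and a b :: 'o
  assumes "group G"
    and "subgroup H G" and "subgroup K G" and "K \<subseteq> H"
    and "h \<in> iso (G\<lparr>carrier := H\<rparr>) (G\<lparr>carrier := K\<rparr>)"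
    and "z \<in> H" and "\<forall>k\<in>K. z \<otimes>\<^bsub>G\<^esub> k = k \<otimes>\<^bsub>G\<^esub> z"
    and "z \<otimes>\<^bsub>G\<^esub> z \<notin> K"
    and "left_invariant_ideal G F" and "h_invariant h H F"
    and "Well_order r" and "a \<in> Field r" and "b \<in> Field r"
    and "(a, b) \<in> r" and "a \<noteq> b"
    and "\<forall>c. (a, c) \<in> r \<and> (c, b) \<in> r \<longrightarrow> c = a \<or> c = b"
    and "A \<subseteq> H" and "A \<in> tau_iter G F r a"
  shows "h ` A \<union> (z <#\<^bsub>G\<^esub> (h ` A)) \<in> tau_iter G F r b"
proof -
  have "doubling G K z"
    using assms(1,2,3,6,7,8)
    by (intro doubling.intro doubling_axioms.intro) (auto intro: subgroup.mem_carrier)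
  then interpret doubling G K z .
  have "z \<noteq> \<one>\<^bsub>G\<^esub>"
    using z_notin_K subgroup.one_closed[OF K] by auto
  then have "h ` A \<in> tau_iter G F r a"
    using tau_iter_image[OF assms(11,9,2,3,5,10) z] assms(17,18) by blast
  moreover have "h ` A \<subseteq> K"
    using assms(5,17) by (auto simp: iso_def bij_betw_def)
  ultimately have "double (h ` A) \<in> tau_iter G F r b"
    using tau_iter_double[OF assms(11,9)] assms(14,15) by blast
  then show ?thesis
    by (simp add: double_def)
qed

end
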